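(* Let $k \geq 3$, let $F$ be a $k$-edge graph with $\gamma(F) = 1$, let $G$ be a pure $(m,F)$-special graph (with a fixed representation), let $H$ and $I$ be two distinct $F$-constituents of $G$, and let $x \in V(H)$ and $y \in V(I)$. Then $G$ has a minimum $F$-isolating set $D$ with $x, y \in D$.
   Context: All graphs are finite and simple. For $D \subseteq V(G)$, $N_G[D]$ is the closed neighbourhood of $D$. A set $D \subseteq V(G)$ is an $F$-isolating set of $G$ if $G - N_G[D]$ contains no subgraph isomorphic to $F$; $\iota(G,F)$ is the minimum size of such a set, and a minimum $F$-isolating set is one of this size. $\gamma(F)=1$ means $F$ has a vertex adjacent to all other vertices of $F$. A pure $(m,F)$-special graph is a graph obtained as follows: $m+1 = q(k+2)$ for an integer $q\ge 1$; take a tree $T$ with $q$ vertices $v_1,\dots,v_q$, pairwise disjoint copies $F_1,\dots,F_q$ of $F$ disjoint from $V(T)$, and vertices $w_i\in V(F_i)$; the graph has vertex set $V(T)\cup\bigcup_i V(F_i)$ and edge set $E(T)\cup\bigcup_i (E(F_i)\cup\{v_iw_i\})$. $T$ is the quotient graph, and for each $i$ the subgraph $G_i$ with vertex set $\{v_i\}\cup V(F_i)$ and edge set $E(F_i)\cup\{v_iw_i\}$ is an $F$-constituent, with $F$-connection $v_i$. *)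

theory Defs
  imports Main
begin

definition graph :: "'a set \<Rightarrow> 'a set set \<Rightarrow> bool" where
  "graph V E \<longleftrightarrow> finite V \<and> (\<forall>e\<in>E. e \<subseteq> V \<and> card e = 2)"

definition closed_nbhd :: "'a set \<Rightarrow> 'a set set \<Rightarrow> 'a set \<Rightarrow> 'a set" where
  "closed_nbhd V E D = D \<union> {u \<in> V. \<exists>d\<in>D. {u, d} \<in> E}"

definition has_copy_in :: "'b set \<Rightarrow> 'b set set \<Rightarrow> 'a set \<Rightarrow> 'a set set \<Rightarrow> bool" where
  "has_copy_in VF EF W E \<longleftrightarrow>
     (\<exists>\<phi>. inj_on \<phi> VF \<and> \<phi> ` VF \<subseteq> W \<and> (\<forall>e\<in>EF. \<phi> ` e \<in> E))"

definition isolating :: "'b set \<Rightarrow> 'b set set \<Rightarrow> 'a set \<Rightarrow> 'a set set \<Rightarrow> 'a set \<Rightarrow> bool" where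
  "isolating VF EF V E D \<longleftrightarrow>
     D \<subseteq> V \<and> \<not> has_copy_in VF EF (V - closed_nbhd V E D) E"

definition iota :: "'b set \<Rightarrow> 'b set set \<Rightarrow> 'a set \<Rightarrow> 'a set set \<Rightarrow> nat" where
  "iota VF EF V E = (LEAST n. \<exists>D. isolating VF EF V E D \<and> card D = n)"

definition min_isolating :: "'b set \<Rightarrow> 'b set set \<Rightarrow> 'a set \<Rightarrow> 'a set set \<Rightarrow> 'a set \<Rightarrow> bool" where
  "min_isolating VF EF V E D \<longleftrightarrow> isolating VF EF V E D \<and> card D = iota VF EF V E"

definition dom_one :: "'b set \<Rightarrow> 'b set set \<Rightarrow> bool" where
  "dom_one VF EF \<longleftrightarrow> (\<exists>c\<in>VF. \<forall>u\<in>VF. u \<noteq> c \<longrightarrow> {c, u} \<in> EF)"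

definition connected_graph :: "'a set \<Rightarrow> 'a set set \<Rightarrow> bool" where
  "connected_graph V E \<longleftrightarrow> (\<forall>u\<in>V. \<forall>v\<in>V. (u, v) \<in> {(a, b). {a, b} \<in> E}\<^sup>*)"

definition has_cycle :: "'a set \<Rightarrow> 'a set set \<Rightarrow> bool" where
  "has_cycle V E \<longleftrightarrow> (\<exists>xs. length xs \<ge> 3 \<and> distinct xs \<and> set xs \<subseteq> V \<and>
      (\<forall>i<length xs. {xs ! i, xs ! ((i + 1) mod length xs)} \<in> E))"

definition tree :: "'a set \<Rightarrow> 'a set set \<Rightarrow> bool" where
  "tree V E \<longleftrightarrow> graph V E \<and> V \<noteq> {} \<and> connected_graph V E \<and> \<not> has_cycle V E"

text \<open>A representation of G = (V,E) as a pure (m,F)-special graph: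
  q copies; tree T with vertices v 0, ..., v (q-1) and edge set ET;
  copy F_i is the image of F under the injection \<sigma> i; w_i = \<sigma> i (c i).\<close>
definition pure_special ::
  "nat \<Rightarrow> 'b set \<Rightarrow> 'b set set \<Rightarrow> 'a set \<Rightarrow> 'a set set \<Rightarrow>
   nat \<Rightarrow> (nat \<Rightarrow> 'a) \<Rightarrow> 'a set set \<Rightarrow> (nat \<Rightarrow> 'b \<Rightarrow> 'a) \<Rightarrow> (nat \<Rightarrow> 'b) \<Rightarrow> bool" where
  "pure_special m VF EF V E q v ET \<sigma> c \<longleftrightarrow>
     q \<ge> 1 \<and> m + 1 = q * (card EF + 2) \<and>
     inj_on v {..<q} \<and> tree (v ` {..<q}) ET \<and>
     (\<forall>i<q. inj_on (\<sigma> i) VF) \<and>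
     (\<forall>i<q. \<sigma> i ` VF \<inter> v ` {..<q} = {}) \<and>
     (\<forall>i<q. \<forall>j<q. i \<noteq> j \<longrightarrow> \<sigma> i ` VF \<inter> \<sigma> j ` VF = {}) \<and>
     (\<forall>i<q. c i \<in> VF) \<and>
     V = v ` {..<q} \<union> (\<Union>i<q. \<sigma> i ` VF) \<and>
     E = ET \<union> (\<Union>i<q. ((`) (\<sigma> i)) ` EF \<union> {{v i, \<sigma> i (c i)}})"

definition constituent_verts :: "'b set \<Rightarrow> (nat \<Rightarrow> 'a) \<Rightarrow> (nat \<Rightarrow> 'b \<Rightarrow> 'a) \<Rightarrow> nat \<Rightarrow> 'a set" where
  "constituent_verts VF v \<sigma> i = insert (v i) (\<sigma> i ` VF)"

end

(*
  Every F-isolating set meets each of the q constituents: otherwise the copy F_l survives,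
  because all neighbours of its vertices lie in the constituent. Hence iota >= q.
  Conversely, take x, y and the connection v_l of every other constituent. A surviving copy
  of F lies in the closed neighbourhood of the image u of a dominating vertex of F. If u is in
  some F_l, the copy lies in the l-th constituent, of which the chosen vertex dominates at
  least two of its |V(F)| + 1 vertices. If u is a tree vertex v_l, the copy lies in
  {w_l, v_i, v_j}, so F is a triangle, which is impossible since the only tree neighbour of
  w_l is v_l.
*)
theory Submission
  imports Defs "HOL-Library.Disjoint_Sets"
begin

lemma inj_on_if_mem_disjoint_family:
  assumes "disjoint_family_on A I" and "\<And>l. l \<in> I \<Longrightarrow> f l \<in> A l"
  shows "inj_on f I"
proof (rule inj_onI)
  fix l n assume "l \<in> I" "n \<in> I" "f l = f n"
  then show "l = n" using assms disjoint_family_onD by fastforce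
qed

lemma card_ge_if_meets_disjoint_family:
  assumes "finite D" and "disjoint_family_on A I" and "\<And>l. l \<in> I \<Longrightarrow> A l \<inter> D \<noteq> {}"
  shows "card I \<le> card D"
proof -
  have "\<forall>l\<in>I. \<exists>t. t \<in> A l \<inter> D" using assms(3) by blast
  then obtain f where f: "\<And>l. l \<in> I \<Longrightarrow> f l \<in> A l \<inter> D" by (metis bchoice)
  have "inj_on f I"
    using assms(2) f by (intro inj_on_if_mem_disjoint_family) auto
  moreover have "f ` I \<subseteq> D" using f by blast
  ultimately show ?thesis using card_inj_on_le assms(1) by blast
qed

lemma card_edges_le_choose_2:
  assumes "graph VF EF"
  shows "card EF \<le> card VF choose 2"
proof -
  have fin: "finite VF" using assms by (simp add: graph_def)
  have "EF \<subseteq> {e. e \<subseteq> VF \<and> card e = 2}" using assms by (auto simp: graph_def)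
  then have "card EF \<le> card {e. e \<subseteq> VF \<and> card e = 2}" using fin by (intro card_mono) auto
  then show ?thesis by (simp add: n_subsets[OF fin])
qed

lemma card_vertices_ge_3:
  assumes "graph VF EF" and "3 \<le> card EF"
  shows "3 \<le> card VF"
proof (rule ccontr)
  assume "\<not> 3 \<le> card VF"
  then have "card VF choose 2 \<le> 1" by (auto simp: choose_two numeral_3_eq_3 not_le less_Suc_eq)
  then show False using card_edges_le_choose_2[OF assms(1)] assms(2) by linarith
qed

lemma edge_if_three_vertices:
  assumes "graph VF EF" and "3 \<le> card EF" and "card VF = 3"
    and "a \<in> VF" and "b \<in> VF" and "a \<noteq> b"
  shows "{a, b} \<in> EF"
proof -
  have fin: "finite VF" using assms by (simp add: graph_def)
  let ?P = "{e. e \<subseteq> VF \<and> card e = 2}"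
  have sub: "EF \<subseteq> ?P" using assms(1) by (auto simp: graph_def)
  have fin_P: "finite ?P" using fin by simp
  have "card ?P = 3" using assms(3) by (simp add: n_subsets[OF fin] choose_two)
  then have "card EF = card ?P" using card_mono[OF fin_P sub] assms(2) by linarith
  then have "EF = ?P" using card_subset_eq[OF fin_P sub] by blast
  then show ?thesis using assms(4-6) by auto
qed

lemma dom_one_ex_nbr:
  assumes "dom_one VF EF" and "2 \<le> card VF" and "b \<in> VF"
  shows "\<exists>b'\<in>VF. b' \<noteq> b \<and> {b, b'} \<in> EF"
proof -
  obtain c0 where c0: "c0 \<in> VF" "\<And>u. u \<in> VF \<Longrightarrow> u \<noteq> c0 \<Longrightarrow> {c0, u} \<in> EF"
    using assms(1) unfolding dom_one_def by blast
  show ?thesis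
  proof (cases "b = c0")
    case True
    have "finite VF" using assms(2) card.infinite by fastforce
    then have "card (VF - {b}) \<noteq> 0" using assms(2,3) by simp
    then obtain b' where "b' \<in> VF - {b}" by (metis card.empty ex_in_conv)
    then show ?thesis using True c0 by blast
  next
    case False
    then show ?thesis using c0 assms(3) by (metis insert_commute)
  qed
qed

lemma copy_sub_closed_nbhd_centre:
  assumes "c0 \<in> VF" and "\<And>u. u \<in> VF \<Longrightarrow> u \<noteq> c0 \<Longrightarrow> {c0, u} \<in> EF"
    and "\<phi> ` VF \<subseteq> V" and "\<forall>e\<in>EF. \<phi> ` e \<in> E"
  shows "\<phi> ` VF \<subseteq> closed_nbhd V E {\<phi> c0}"
proof
  fix z assume "z \<in> \<phi> ` VF"
  then obtain b where b: "b \<in> VF" "z = \<phi> b" by blast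
  show "z \<in> closed_nbhd V E {\<phi> c0}"
  proof (cases "b = c0")
    case False
    then have "\<phi> ` {c0, b} \<in> E" using assms(2,4) b(1) by blast
    then show ?thesis using b assms(3) by (auto simp: closed_nbhd_def insert_commute)
  qed (simp add: b closed_nbhd_def)
qed

locale pure_special_graph =
  fixes m :: nat and VF :: "'b set" and EF :: "'b set set" and V :: "'a set" and E :: "'a set set"
    and q :: nat and v :: "nat \<Rightarrow> 'a" and ET :: "'a set set" and \<sigma> :: "nat \<Rightarrow> 'b \<Rightarrow> 'a"
    and c :: "nat \<Rightarrow> 'b"
  assumes pure_special: "pure_special m VF EF V E q v ET \<sigma> c" and graph_F: "graph VF EF"
begin

abbreviation constituent :: "nat \<Rightarrow> 'a set" where
  "constituent \<equiv> constituent_verts VF v \<sigma>"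

lemma finite_VF: "finite VF"
  using graph_F by (simp add: graph_def)

lemma V_eq: "V = v ` {..<q} \<union> (\<Union>l<q. \<sigma> l ` VF)"
  using pure_special by (simp add: pure_special_def)

lemma E_eq: "E = ET \<union> (\<Union>l<q. (`) (\<sigma> l) ` EF \<union> {{v l, \<sigma> l (c l)}})"
  using pure_special by (simp add: pure_special_def)

lemma finite_V: "finite V"
  using V_eq finite_VF by simp

lemma tree_edge_sub: "e \<in> ET \<Longrightarrow> e \<subseteq> v ` {..<q}"
  using pure_special by (auto simp: pure_special_def tree_def graph_def)

lemma c_mem: "l < q \<Longrightarrow> c l \<in> VF"
  using pure_special by (simp add: pure_special_def)

lemma inj_on_\<sigma>: "l < q \<Longrightarrow> inj_on (\<sigma> l) VF"
  using pure_special by (simp add: pure_special_def)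

lemma v_eq_iff: "l < q \<Longrightarrow> n < q \<Longrightarrow> v l = v n \<longleftrightarrow> l = n"
  using pure_special by (auto simp: pure_special_def dest: inj_onD)

lemma \<sigma>_neq_v: "l < q \<Longrightarrow> n < q \<Longrightarrow> a \<in> VF \<Longrightarrow> \<sigma> l a \<noteq> v n"
  using pure_special by (auto simp: pure_special_def)

lemma \<sigma>_eq_imp_eq: "l < q \<Longrightarrow> n < q \<Longrightarrow> a \<in> VF \<Longrightarrow> b \<in> VF \<Longrightarrow> \<sigma> l a = \<sigma> n b \<Longrightarrow> l = n"
  using pure_special unfolding pure_special_def by blast

lemma copy_edge: "l < q \<Longrightarrow> e \<in> EF \<Longrightarrow> \<sigma> l ` e \<in> E"
  using E_eq by blast

lemma connection_edge: "l < q \<Longrightarrow> {v l, \<sigma> l (c l)} \<in> E"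
  using E_eq by blast

lemma constituents_disjoint: "disjoint_family_on constituent {..<q}"
  unfolding disjoint_family_on_def constituent_verts_def
  by (auto simp: v_eq_iff dest: \<sigma>_neq_v \<sigma>_eq_imp_eq)

lemma constituent_sub_V: "l < q \<Longrightarrow> constituent l \<subseteq> V"
  using V_eq by (auto simp: constituent_verts_def)

lemma card_constituent:
  assumes "l < q"
  shows "card (constituent l) = Suc (card VF)"
proof -
  have "v l \<notin> \<sigma> l ` VF" using \<sigma>_neq_v[OF assms assms] by (metis imageE)
  then show ?thesis
    using finite_VF inj_on_\<sigma>[OF assms] by (simp add: constituent_verts_def card_image)
qed

lemma edge_F_sub: "e \<in> EF \<Longrightarrow> e \<subseteq> VF"
  using graph_F by (simp add: graph_def)

lemma edge_in_tree_or_constituent: "e \<in> E \<Longrightarrow> e \<in> ET \<or> (\<exists>n<q. e \<subseteq> constituent n)"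
  unfolding E_eq using edge_F_sub c_mem by (fastforce simp: constituent_verts_def)

lemma copy_vertex_nbr:
  assumes "l < q" and "a \<in> VF" and "{\<sigma> l a, z} \<in> E"
  shows "z \<in> constituent l"
  using edge_in_tree_or_constituent[OF assms(3)]
proof
  assume "{\<sigma> l a, z} \<in> ET"
  then show ?thesis using tree_edge_sub assms(1,2) \<sigma>_neq_v by blast
next
  assume "\<exists>n<q. {\<sigma> l a, z} \<subseteq> constituent n"
  then obtain n where n: "n < q" "{\<sigma> l a, z} \<subseteq> constituent n" by blast
  have "\<sigma> l a \<in> constituent l" using assms(2) by (simp add: constituent_verts_def)
  then have "n = l"
    using n constituents_disjoint assms(1) by (auto simp: disjoint_family_on_def)
  then show ?thesis using n by simp
qed

lemma tree_vertex_nbr: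
  assumes "l < q" and "{v l, z} \<in> E"
  shows "z \<in> v ` {..<q} \<or> z = \<sigma> l (c l)"
proof -
  consider "{v l, z} \<in> ET"
    | n f where "n < q" "f \<in> EF" "{v l, z} = \<sigma> n ` f"
    | n where "n < q" "{v l, z} = {v n, \<sigma> n (c n)}"
    using assms(2) E_eq by blast
  then show ?thesis
  proof cases
    case 1
    then show ?thesis using tree_edge_sub by blast
  next
    case 2
    then show ?thesis using edge_F_sub assms(1) \<sigma>_neq_v by (metis image_iff insertI1 subsetD)
  next
    case 3
    then have "v l = v n" "z = \<sigma> n (c n)"
      using \<sigma>_neq_v[OF 3(1) assms(1) c_mem[OF 3(1)]] by (auto simp: doubleton_eq_iff)
    then show ?thesis using v_eq_iff assms(1) 3(1) by blast
  qed
qed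

lemma closed_nbhd_copy_vertex:
  "l < q \<Longrightarrow> a \<in> VF \<Longrightarrow> closed_nbhd V E {\<sigma> l a} \<subseteq> constituent l"
  unfolding closed_nbhd_def using copy_vertex_nbr
  by (auto simp: constituent_verts_def insert_commute)

lemma closed_nbhd_tree_vertex:
  "l < q \<Longrightarrow> closed_nbhd V E {v l} \<subseteq> insert (\<sigma> l (c l)) (v ` {..<q})"
  unfolding closed_nbhd_def using tree_vertex_nbr by (auto simp: insert_commute)

lemma isolating_meets_constituent:
  assumes "isolating VF EF V E D" and "l < q"
  shows "D \<inter> constituent l \<noteq> {}"
proof
  assume D: "D \<inter> constituent l = {}"
  have "\<sigma> l ` VF \<subseteq> V - closed_nbhd V E D"
  proof
    fix z assume "z \<in> \<sigma> l ` VF"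
    then obtain a where a: "a \<in> VF" "z = \<sigma> l a" by blast
    then have "z \<in> constituent l" by (simp add: constituent_verts_def)
    moreover have "{z, t} \<notin> E" if "t \<in> D" for t
      using copy_vertex_nbr[OF assms(2) a(1)] D that a(2) by blast
    ultimately show "z \<in> V - closed_nbhd V E D"
      using D constituent_sub_V[OF assms(2)] by (auto simp: closed_nbhd_def)
  qed
  then have "has_copy_in VF EF (V - closed_nbhd V E D) E"
    unfolding has_copy_in_def using inj_on_\<sigma> copy_edge assms(2) by blast
  then show False using assms(1) by (simp add: isolating_def)
qed

lemma card_ge_if_isolating:
  assumes "isolating VF EF V E D"
  shows "q \<le> card D"
proof -
  have "finite D" using assms finite_V by (auto simp: isolating_def intro: finite_subset)
  then show ?thesis
    using card_ge_if_meets_disjoint_family[OF _ constituents_disjoint] isolating_meets_constituent[OF assms]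
    by fastforce
qed

lemma min_isolating_if_card_eq:
  assumes "isolating VF EF V E D" and "card D = q"
  shows "min_isolating VF EF V E D"
proof -
  have "iota VF EF V E = q"
    unfolding iota_def using assms card_ge_if_isolating by (intro Least_equality) auto
  then show ?thesis using assms by (simp add: min_isolating_def)
qed

lemma card_undominated_constituent_less:
  assumes "dom_one VF EF" and "2 \<le> card VF" and "l < q" and "D \<inter> constituent l \<noteq> {}"
  shows "card (constituent l - closed_nbhd V E D) < card VF"
proof -
  obtain t where t: "t \<in> D" "t \<in> constituent l" using assms(4) by blast
  obtain t' where t': "t' \<in> constituent l" "t' \<noteq> t" "{t', t} \<in> E"
  proof (cases "t = v l")
    case True
    then show ?thesis
      using that[of "\<sigma> l (c l)"] connection_edge \<sigma>_neq_v c_mem assms(3)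
      by (auto simp: constituent_verts_def insert_commute)
  next
    case False
    then obtain b where b: "b \<in> VF" "t = \<sigma> l b" using t(2) by (auto simp: constituent_verts_def)
    obtain b' where b': "b' \<in> VF" "b' \<noteq> b" "{b, b'} \<in> EF"
      using dom_one_ex_nbr[OF assms(1,2) b(1)] by blast
    have "\<sigma> l b' \<noteq> \<sigma> l b" using inj_on_\<sigma>[OF assms(3)] b b' by (auto dest: inj_onD)
    then show ?thesis
      using that[of "\<sigma> l b'"] copy_edge[OF assms(3) b'(3)] b b'
      by (auto simp: constituent_verts_def insert_commute)
  qed
  have "{t, t'} \<subseteq> constituent l \<inter> closed_nbhd V E D"
    using t t' constituent_sub_V[OF assms(3)] by (auto simp: closed_nbhd_def)
  then have "card (constituent l - closed_nbhd V E D) \<le> card (constituent l - {t, t'})"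
    using finite_VF by (intro card_mono) (auto simp: constituent_verts_def)
  also have "\<dots> = card VF - 1"
    using t t' card_constituent[OF assms(3)] by (simp add: card_Diff_subset)
  finally show ?thesis using assms(2) by linarith
qed

lemma undominated_nbhd_of_tree_vertex:
  assumes "l < q" and "\<And>n. n < q \<Longrightarrow> n \<noteq> i \<Longrightarrow> n \<noteq> j \<Longrightarrow> v n \<in> D"
  shows "closed_nbhd V E {v l} - closed_nbhd V E D \<subseteq> {\<sigma> l (c l), v i, v j}"
proof -
  have "v n \<in> closed_nbhd V E D" if "n < q" "n \<noteq> i" "n \<noteq> j" for n
    using assms(2)[OF that] by (simp add: closed_nbhd_def)
  then show ?thesis using closed_nbhd_tree_vertex[OF assms(1)] by blast
qed

lemma v_mem_constituent_iff: "n < q \<Longrightarrow> l < q \<Longrightarrow> v n \<in> constituent l \<longleftrightarrow> n = l"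
  unfolding constituent_verts_def using v_eq_iff \<sigma>_neq_v by (metis image_iff insert_iff)

lemma no_copy_in_tree_vertex_triple:
  assumes "3 \<le> card EF" and "i < q" and "j < q" and "l < q"
    and "inj_on \<phi> VF" and "\<forall>e\<in>EF. \<phi> ` e \<in> E" and "\<phi> ` VF \<subseteq> {\<sigma> l (c l), v i, v j}"
  shows False
proof -
  let ?T = "{\<sigma> l (c l), v i, v j}"
  have "3 \<le> card (\<phi> ` VF)"
    using card_vertices_ge_3[OF graph_F assms(1)] assms(5) by (simp add: card_image)
  moreover have "card ?T \<le> 3" by (simp add: card_insert_le_m1)
  moreover have "card (\<phi> ` VF) \<le> card ?T" using card_mono[OF _ assms(7)] by simp
  ultimately have card_T: "card ?T = 3" and "\<phi> ` VF = ?T"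
    using card_seteq[OF _ assms(7)] by auto
  have "card VF = 3" using card_T \<open>\<phi> ` VF = ?T\<close> card_image[OF assms(5)] by simp
  have adj: "{x, y} \<in> E" if xy: "x \<in> \<phi> ` VF" "y \<in> \<phi> ` VF" "x \<noteq> y" for x y
  proof -
    obtain a b where ab: "a \<in> VF" "b \<in> VF" "x = \<phi> a" "y = \<phi> b" using xy(1,2) by blast
    then have "{a, b} \<in> EF"
      using edge_if_three_vertices[OF graph_F assms(1) \<open>card VF = 3\<close>] xy(3) by blast
    then show ?thesis using assms(6) ab(3,4) by force
  qed
  have "v n \<in> constituent l" if "n = i \<or> n = j" for n
    using copy_vertex_nbr[OF assms(4) c_mem[OF assms(4)] adj] that \<open>\<phi> ` VF = ?T\<close>
      \<sigma>_neq_v[OF assms(4) _ c_mem[OF assms(4)]] assms(2,3) by auto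
  then have "i = l" "j = l" using v_mem_constituent_iff assms(2-4) by blast+
  then show False using card_T by (cases "\<sigma> l (c l) = v l") simp_all
qed

lemma isolating_if_meets_constituents:
  assumes "dom_one VF EF" and "3 \<le> card EF" and "i < q" and "j < q" and "D \<subseteq> V"
    and "\<And>l. l < q \<Longrightarrow> D \<inter> constituent l \<noteq> {}"
    and "\<And>n. n < q \<Longrightarrow> n \<noteq> i \<Longrightarrow> n \<noteq> j \<Longrightarrow> v n \<in> D"
  shows "isolating VF EF V E D"
  unfolding isolating_def
proof (intro conjI notI assms(5))
  let ?W = "V - closed_nbhd V E D"
  assume "has_copy_in VF EF ?W E"
  then obtain \<phi> where \<phi>: "inj_on \<phi> VF" "\<phi> ` VF \<subseteq> ?W" "\<forall>e\<in>EF. \<phi> ` e \<in> E"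
    unfolding has_copy_in_def by blast
  obtain c0 where c0: "c0 \<in> VF" "\<And>u. u \<in> VF \<Longrightarrow> u \<noteq> c0 \<Longrightarrow> {c0, u} \<in> EF"
    using assms(1) unfolding dom_one_def by blast
  define S where "S = \<phi> ` VF"
  have card_S: "card S = card VF" unfolding S_def using \<phi>(1) by (simp add: card_image)
  have card_VF: "3 \<le> card VF" using card_vertices_ge_3[OF graph_F assms(2)] .
  have S_W: "S \<subseteq> ?W" using \<phi>(2) by (simp add: S_def)
  have S_nbhd: "S \<subseteq> closed_nbhd V E {\<phi> c0}"
    unfolding S_def using copy_sub_closed_nbhd_centre[OF c0 _ \<phi>(3)] \<phi>(2) by blast
  have "\<phi> c0 \<in> V" using \<phi>(2) c0(1) by blast
  then consider l a where "l < q" "a \<in> VF" "\<phi> c0 = \<sigma> l a" | l where "l < q" "\<phi> c0 = v l"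
    unfolding V_eq by blast
  then show False
  proof cases
    case (1 l a)
    have "S \<subseteq> constituent l - closed_nbhd V E D"
      using S_nbhd S_W closed_nbhd_copy_vertex[OF 1(1,2)] unfolding 1(3) by blast
    then have "card S \<le> card (constituent l - closed_nbhd V E D)"
      using finite_VF by (intro card_mono) (auto simp: constituent_verts_def)
    moreover have "2 \<le> card VF" using card_VF by linarith
    ultimately show False
      using card_undominated_constituent_less[OF assms(1) _ 1(1) assms(6)[OF 1(1)]] card_S
      by linarith
  next
    case (2 l)
    have "S \<subseteq> closed_nbhd V E {v l} - closed_nbhd V E D"
      using S_nbhd S_W 2(2) by auto
    also have "\<dots> \<subseteq> {\<sigma> l (c l), v i, v j}"
      by (rule undominated_nbhd_of_tree_vertex[OF 2(1) assms(7)])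
    finally show False
      unfolding S_def by (rule no_copy_in_tree_vertex_triple[OF assms(2,3,4) 2(1) \<phi>(1,3)])
  qed
qed

lemma min_isolating_transversal:
  assumes "dom_one VF EF" and "3 \<le> card EF" and "i < q" and "j < q"
    and "x \<in> constituent i" and "y \<in> constituent j"
  shows "min_isolating VF EF V E ((\<lambda>l. if l = i then x else if l = j then y else v l) ` {..<q})"
    (is "min_isolating VF EF V E (?t ` {..<q})")
proof -
  have t: "?t l \<in> constituent l" if "l < q" for l
    using assms(5,6) by (auto simp: constituent_verts_def)
  have "inj_on ?t {..<q}"
    using t by (intro inj_on_if_mem_disjoint_family[OF constituents_disjoint]) simp
  then have "card (?t ` {..<q}) = q" by (metis card_image card_lessThan)
  moreover have "isolating VF EF V E (?t ` {..<q})"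
  proof (rule isolating_if_meets_constituents[OF assms(1-4)])
    show "?t ` {..<q} \<subseteq> V" using t constituent_sub_V by blast
    show "?t ` {..<q} \<inter> constituent l \<noteq> {}" if "l < q" for l
      using t[OF that] that by blast
    show "v n \<in> ?t ` {..<q}" if "n < q" "n \<noteq> i" "n \<noteq> j" for n
      using that by (auto intro: image_eqI[where x = n])
  qed
  ultimately show ?thesis using min_isolating_if_card_eq by blast
qed

end

theorem lemma3p5:
  fixes VF :: "'b set" and EF :: "'b set set"
    and V :: "'a set" and E :: "'a set set"
    and v :: "nat \<Rightarrow> 'a" and \<sigma> :: "nat \<Rightarrow> 'b \<Rightarrow> 'a" and c :: "nat \<Rightarrow> 'b"
  assumes "graph VF EF"
    and "card EF = k" and "k \<ge> 3"
    and "dom_one VF EF"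
    and "pure_special m VF EF V E q v ET \<sigma> c"
    and "i < q" and "j < q" and "i \<noteq> j"
    and "x \<in> constituent_verts VF v \<sigma> i"
    and "y \<in> constituent_verts VF v \<sigma> j"
  shows "\<exists>D. min_isolating VF EF V E D \<and> x \<in> D \<and> y \<in> D"
proof -
  interpret pure_special_graph m VF EF V E q v ET \<sigma> c
    using assms(1,5) by unfold_locales
  let ?D = "(\<lambda>l. if l = i then x else if l = j then y else v l) ` {..<q}"
  have "min_isolating VF EF V E ?D"
    using min_isolating_transversal assms(2-4,6,7,9,10) by simp
  moreover have "x \<in> ?D" "y \<in> ?D"
    using assms(6-8) by (auto intro: image_eqI[where x = i] image_eqI[where x = j])
  ultimately show ?thesis by blast
qed

end
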